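(* Let $f(x)=\sum_{i=0}^d a_ix^i\in k[x]$ satisfy condition $(\ast)$. Then there exists a dense open subset $U_f\subseteq\mathbb G_{m,k}$ (with coordinate $s$) such that for all $s\in U_f$ the degree of an Artin–Schreier reduced form of $sf(x)$ is constant and equal to $e(f):=\max\{ i_{\hat p} : 1\le i\le d,\ a_i\neq 0\}$.
   Context: Let $p$ be a prime and $k$ a finite field of characteristic $p$. Condition $(\ast)$ on $f=\sum a_ix^i$: there exists an integer $i>0$ which is not a power of $p$ with $a_i\neq 0$. For a positive integer $n$, $n_{\hat p}$ denotes its prime-to-$p$ part. Two polynomials in $k[x]$ (or $\bar k[x]$) are Artin–Schreier equivalent if their difference is of the form $h^p-h$ for some polynomial $h$. A polynomial $g=\sum b_ix^i$ is an Artin–Schreier reduced form of $f$ if it is Artin–Schreier equivalent to $f$ and $b_i=0$ for every $i>0$ divisible by $p$ (it is unique up to adding a constant). *)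

theory Defs
  imports "HOL-Algebra.Algebraic_Closure_Type"
begin

definition AS_equiv :: "'b::comm_ring_1 poly \<Rightarrow> 'b poly \<Rightarrow> bool" where
  "AS_equiv f g \<longleftrightarrow> (\<exists>h. f - g = h ^ CHAR('b) - h)"

definition AS_reduced_form :: "'b::comm_ring_1 poly \<Rightarrow> 'b poly \<Rightarrow> bool" where
  "AS_reduced_form f g \<longleftrightarrow>
     AS_equiv f g \<and> (\<forall>i. 0 < i \<and> CHAR('b) dvd i \<longrightarrow> coeff g i = 0)"

definition prime_to_part :: "nat \<Rightarrow> nat \<Rightarrow> nat" where
  "prime_to_part p n = n div p ^ multiplicity p n"

definition cond_star :: "nat \<Rightarrow> 'b::zero poly \<Rightarrow> bool" where
  "cond_star p f \<longleftrightarrow> (\<exists>i>0. (\<nexists>j. i = p ^ j) \<and> coeff f i \<noteq> 0)"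

definition AS_e :: "nat \<Rightarrow> 'b::zero poly \<Rightarrow> nat" where
  "AS_e p f = Max {prime_to_part p i | i. 1 \<le> i \<and> i \<le> degree f \<and> coeff f i \<noteq> 0}"

end

theory Submission
  imports Defs
begin

text \<open>Reduced forms exist over the algebraic closure: a coefficient \<open>c\<close> at \<open>x^(p m)\<close> can be
  traded for \<open>c^(1/p)\<close> at \<open>x^m\<close>. If \<open>F - r = h^p - h\<close> with \<open>r\<close> reduced and \<open>p\<close> does not
  divide \<open>j\<close>, the coefficients \<open>u_k\<close> of \<open>h\<close> at \<open>j p^k\<close> satisfy \<open>u_0 = r_j - F_j\<close>,
  \<open>u_(k+1) = u_k^p - F_(j p^(k+1))\<close>, and vanish for large \<open>k\<close>. Where \<open>F\<close> contributes nothing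
  the recursion is pure Frobenius, so the chain must already vanish there. For \<open>F = s f\<close> and
  \<open>j > e(f)\<close> this gives \<open>r_j = 0\<close>; for \<open>j = e(f)\<close>, \<open>r_j = 0\<close> would make a fixed polynomial
  in \<open>s\<close> (built by the same recursion) vanish at \<open>s\<close>. That polynomial is nonzero, since its
  degree gets multiplied by \<open>p\<close> at every step once it is nonzero.\<close>

lemma prime_to_part_mult_power: "i = prime_to_part p i * p ^ multiplicity p i"
  unfolding prime_to_part_def using multiplicity_dvd[of p i] by simp

lemma prime_to_part_pos: "0 < i \<Longrightarrow> 0 < prime_to_part p i"
  using prime_to_part_mult_power[of i p] by (metis gr0I mult_0)

lemma not_dvd_prime_to_part:
  assumes "prime (p::nat)" "0 < i"
  shows "\<not> p dvd prime_to_part p i"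
  unfolding prime_to_part_def
  using multiplicity_decompose[of i p] prime_gt_1_nat[OF assms(1)] assms(2) by auto

lemma prime_to_part_mult_prime_power:
  assumes "prime (p::nat)" "\<not> p dvd j" "0 < j"
  shows "prime_to_part p (j * p ^ k) = j"
proof -
  have "multiplicity p (j * p ^ k) = k"
    using assms prime_elem_multiplicity_mult_distrib[of p j "p ^ k"]
    by (simp add: not_dvd_imp_multiplicity_0 prime_gt_0_nat)
  thus ?thesis unfolding prime_to_part_def using assms by (simp add: prime_gt_0_nat)
qed

lemma prime_to_part_le_AS_e:
  assumes "0 < i" "coeff f i \<noteq> 0"
  shows "prime_to_part p i \<le> AS_e p f"
proof -
  have "i \<le> degree f" using assms(2) by (rule le_degree)
  moreover have "finite (prime_to_part p ` {1..degree f})" by simp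
  ultimately show ?thesis
    unfolding AS_e_def using assms
    by (intro Max_ge) (auto intro: finite_subset[rotated])
qed

lemma AS_e_attained:
  assumes "0 < i" "coeff f i \<noteq> 0"
  obtains j where "0 < j" "coeff f j \<noteq> 0" "prime_to_part p j = AS_e p f"
proof -
  let ?E = "{prime_to_part p i | i. 1 \<le> i \<and> i \<le> degree f \<and> coeff f i \<noteq> 0}"
  have "finite ?E"
    by (rule finite_subset[of _ "prime_to_part p ` {1..degree f}"]) auto
  moreover have "?E \<noteq> {}" using assms le_degree[of f i] by fastforce
  ultimately have "AS_e p f \<in> ?E" unfolding AS_e_def by (rule Max_in)
  then obtain j where "1 \<le> j" "coeff f j \<noteq> 0" "prime_to_part p j = AS_e p f" by auto
  then show ?thesis by (intro that) auto
qed

lemma coeff_power_CHAR: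
  fixes h :: "'b::comm_ring_1 poly"
  assumes "prime CHAR('b)"
  shows "coeff (h ^ CHAR('b)) n =
           (if CHAR('b) dvd n then coeff h (n div CHAR('b)) ^ CHAR('b) else 0)"
proof -
  define p where "p = CHAR('b)"
  have "p > 0" using assms prime_gt_0_nat p_def by blast
  have "h ^ p = (\<Sum>i\<le>degree h. monom (coeff h i) i) ^ p"
    by (simp add: poly_as_sum_of_monoms)
  also have "\<dots> = (\<Sum>i\<le>degree h. monom (coeff h i ^ p) (i * p))"
    using assms by (simp add: freshmans_dream_sum p_def monom_power)
  finally have "coeff (h ^ p) n = (\<Sum>i\<le>degree h. if i * p = n then coeff h i ^ p else 0)"
    by (simp add: coeff_sum)
  also have "\<dots> = (if p dvd n then coeff h (n div p) ^ p else 0)"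
  proof (cases "p dvd n")
    case True
    then obtain q where q: "n = q * p" by (metis dvd_def mult.commute)
    have "(\<Sum>i\<le>degree h. if i * p = n then coeff h i ^ p else 0)
            = (\<Sum>i\<le>degree h. if i = q then coeff h i ^ p else 0)"
      using \<open>p > 0\<close> q by (intro sum.cong) auto
    also have "\<dots> = coeff h q ^ p"
      using \<open>p > 0\<close> by (auto simp: coeff_eq_0 zero_power)
    finally show ?thesis using True q \<open>p > 0\<close> by simp
  qed (auto intro!: sum.neutral)
  finally show ?thesis by (simp add: p_def)
qed

lemma AS_equiv_refl: "0 < CHAR('b) \<Longrightarrow> AS_equiv G (G :: 'b::comm_ring_1 poly)"
  unfolding AS_equiv_def by (intro exI[of _ 0]) (simp add: power_0_left)

lemma AS_equiv_trans:
  fixes F G H :: "'b::comm_ring_1 poly"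
  assumes "prime CHAR('b)" "AS_equiv F G" "AS_equiv G H"
  shows "AS_equiv F H"
proof -
  obtain h1 h2 where h1: "F - G = h1 ^ CHAR('b) - h1" and h2: "G - H = h2 ^ CHAR('b) - h2"
    using assms(2,3) unfolding AS_equiv_def by blast
  have "F - H = (F - G) + (G - H)" by simp
  also have "\<dots> = (h1 ^ CHAR('b) + h2 ^ CHAR('b)) - (h1 + h2)" unfolding h1 h2 by simp
  also have "h1 ^ CHAR('b) + h2 ^ CHAR('b) = (h1 + h2) ^ CHAR('b)"
    by (rule freshmans_dream[symmetric]) (simp_all add: assms(1))
  finally have "F - H = (h1 + h2) ^ CHAR('b) - (h1 + h2)" .
  then show ?thesis unfolding AS_equiv_def by blast
qed

lemma AS_equiv_monom_root:
  fixes G :: "'b::comm_ring_1 poly"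
  assumes "c' ^ CHAR('b) = c"
  shows "AS_equiv G (G - monom c (CHAR('b) * m) + monom c' m)"
  unfolding AS_equiv_def using assms
  by (intro exI[of _ "monom c' m"]) (simp add: monom_power mult.commute)

lemma AS_reduced_form_exists:
  fixes G :: "'b::comm_ring_1 poly"
  assumes prime: "prime CHAR('b)" and frobenius_surj: "surj (\<lambda>c::'b. c ^ CHAR('b))"
  shows "\<exists>r. AS_reduced_form G r"
proof -
  define p where "p = CHAR('b)"
  have "p > 1" using prime prime_gt_1_nat p_def by blast
  have "\<exists>r. AS_reduced_form G r" if "\<forall>i>n. p dvd i \<longrightarrow> coeff G i = 0" for n and G :: "'b poly"
    using that
  proof (induction n arbitrary: G)
    case 0
    then show ?case
      using AS_equiv_refl[of G] \<open>p > 1\<close> unfolding AS_reduced_form_def p_def by auto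
  next
    case (Suc n)
    show ?case
    proof (cases "p dvd Suc n")
      case False
      then show ?thesis using Suc by (metis Suc_lessI)
    next
      case True
      then obtain m where m: "Suc n = p * m" by (elim dvdE)
      then have "0 < m" by (metis Zero_not_Suc mult_0_right neq0_conv)
      with m \<open>p > 1\<close> have "m < Suc n" by simp
      obtain c' where c': "c' ^ p = coeff G (Suc n)"
        using frobenius_surj unfolding p_def by (metis surjD)
      define G' where "G' = G - monom (coeff G (Suc n)) (p * m) + monom c' m"
      have "coeff G' i = 0" if "n < i" "p dvd i" for i
      proof (cases "i = Suc n")
        case True
        then show ?thesis using \<open>m < Suc n\<close> by (simp add: G'_def m)
      next
        case False
        with that \<open>m < Suc n\<close> have "m < i" "Suc n < i" by simp_all
        then show ?thesis using that Suc.prems m by (simp add: G'_def)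
      qed
      then obtain r where r: "AS_reduced_form G' r" using Suc.IH by blast
      have "AS_equiv G G'"
        unfolding G'_def p_def by (rule AS_equiv_monom_root) (use c' p_def in simp)
      then have "AS_equiv G r"
        using r prime AS_equiv_trans unfolding AS_reduced_form_def by blast
      then show ?thesis using r unfolding AS_reduced_form_def by blast
    qed
  qed
  then show ?thesis by (meson coeff_eq_0)
qed

text \<open>The recursion obeyed by the coefficients of \<open>h\<close> at \<open>j p^k\<close>, \<open>k = 0, 1, ...\<close>, when
  \<open>F - r = h^p - h\<close>; the coefficients of \<open>F\<close> at these places are \<open>c\<close>.\<close>
primrec frob_chain :: "nat \<Rightarrow> 'a::comm_ring_1 \<Rightarrow> (nat \<Rightarrow> 'a) \<Rightarrow> nat \<Rightarrow> 'a" where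
  "frob_chain p x c 0 = x"
| "frob_chain p x c (Suc k) = frob_chain p x c k ^ p - c (Suc k)"

lemma frob_chain_hom:
  assumes "\<And>x y. \<phi> (x - y) = \<phi> x - \<phi> y" "\<And>x n. \<phi> (x ^ n) = \<phi> x ^ n"
  shows "\<phi> (frob_chain p x c k) = frob_chain p (\<phi> x) (\<phi> \<circ> c) k"
  by (induction k) (simp_all add: assms)

lemma frob_chain_eq_0_if_eventually_0:
  fixes c :: "nat \<Rightarrow> 'a::idom"
  assumes "\<And>k. N < k \<Longrightarrow> c k = 0"
    and "\<forall>\<^sub>F k in sequentially. frob_chain p x c k = 0"
  shows "frob_chain p x c N = 0"
proof -
  have power: "frob_chain p x c (N + d) = frob_chain p x c N ^ (p ^ d)" for d
    by (induction d) (simp_all add: assms(1) power_mult[symmetric] mult.commute)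
  obtain K where "\<forall>k\<ge>K. frob_chain p x c k = 0"
    using assms(2) unfolding eventually_sequentially by blast
  then have "frob_chain p x c N ^ (p ^ K) = 0" using power[of K] by simp
  then show ?thesis by simp
qed

lemma AS_reduced_form_frob_chain:
  fixes F r :: "'b::comm_ring_1 poly"
  assumes prime: "prime CHAR('b)" and "CHAR('b) = p" and r: "AS_reduced_form F r"
    and j: "0 < j" "\<not> p dvd j"
  shows "\<forall>\<^sub>F k in sequentially. frob_chain p (coeff r j - coeff F j) (\<lambda>k. coeff F (j * p ^ k)) k = 0"
proof -
  obtain h where h: "F - r = h ^ p - h" and r_red: "\<And>i. 0 < i \<Longrightarrow> p dvd i \<Longrightarrow> coeff r i = 0"
    using r assms(2) unfolding AS_reduced_form_def AS_equiv_def by auto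
  have "p \<ge> 2" using prime assms(2) prime_ge_2_nat by blast
  have coeff_h: "coeff F n - coeff r n = (if p dvd n then coeff h (n div p) ^ p else 0) - coeff h n" for n
    using arg_cong[OF h, of "\<lambda>P. coeff P n"] coeff_power_CHAR[OF prime, of h n] assms(2) by simp
  have chain: "frob_chain p (coeff r j - coeff F j) (\<lambda>k. coeff F (j * p ^ k)) k = coeff h (j * p ^ k)" for k
  proof (induction k)
    case 0
    then show ?case using coeff_h[of j] j by (simp add: algebra_simps)
  next
    case (Suc k)
    have "p dvd j * p ^ Suc k" "j * p ^ Suc k div p = j * p ^ k"
      using \<open>p \<ge> 2\<close> by simp_all
    then show ?case
      using Suc coeff_h[of "j * p ^ Suc k"] r_red[of "j * p ^ Suc k"] j \<open>p \<ge> 2\<close>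
      by (simp add: algebra_simps)
  qed
  have "coeff h (j * p ^ k) = 0" if "degree h < k" for k
  proof (rule coeff_eq_0)
    have "k \<le> p ^ k" using \<open>p \<ge> 2\<close> by simp
    also have "\<dots> \<le> j * p ^ k" using j by simp
    finally show "degree h < j * p ^ k" using that by simp
  qed
  then show ?thesis unfolding chain eventually_sequentially by (meson Suc_le_eq)
qed

lemma AS_reduced_form_degree:
  fixes F r :: "'b::idom poly"
  assumes prime: "prime CHAR('b)" and p: "CHAR('b) = p" and r: "AS_reduced_form F r"
    and e: "0 < e" "\<not> p dvd e"
    and above_e: "\<And>j k. e < j \<Longrightarrow> \<not> p dvd j \<Longrightarrow> coeff F (j * p ^ k) = 0"
    and beyond_N: "\<And>k. N < k \<Longrightarrow> coeff F (e * p ^ k) = 0"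
    and chain: "frob_chain p (- coeff F e) (\<lambda>k. coeff F (e * p ^ k)) N \<noteq> 0"
  shows "degree r = e"
proof (rule antisym)
  have "coeff r j = 0" if "e < j" for j
  proof (cases "p dvd j")
    case True
    then show ?thesis using r that p unfolding AS_reduced_form_def by auto
  next
    case False
    have "frob_chain p (coeff r j - coeff F j) (\<lambda>k. coeff F (j * p ^ k)) 0 = 0"
      by (rule frob_chain_eq_0_if_eventually_0)
         (use above_e[OF that False] AS_reduced_form_frob_chain[OF prime p r, of j] that False
          in auto)
    then show ?thesis using above_e[OF that False, of 0] by simp
  qed
  then show "degree r \<le> e" by (meson degree_le)
next
  have "coeff r e \<noteq> 0"
  proof
    assume "coeff r e = 0"
    then have "frob_chain p (- coeff F e) (\<lambda>k. coeff F (e * p ^ k)) N = 0"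
      using frob_chain_eq_0_if_eventually_0[OF beyond_N AS_reduced_form_frob_chain[OF prime p r e]]
      by simp
    then show False using chain by contradiction
  qed
  then show "e \<le> degree r" by (rule le_degree)
qed

lemma frob_chain_linear_nonzero:
  fixes a :: "nat \<Rightarrow> 'b::idom"
  assumes "1 < p" "a t \<noteq> 0" "t \<le> k"
  shows "frob_chain p (- [:0, a 0:]) (\<lambda>k. [:0, a k:]) k \<noteq> 0"
  using assms(3)
proof (induction k)
  case 0
  then show ?case using assms(2) by simp
next
  case (Suc k)
  let ?V = "frob_chain p (- [:0, a 0:]) (\<lambda>k. [:0, a k:])"
  show ?case
  proof (cases "?V k = 0")
    case True
    with Suc assms(1,2) have "t = Suc k" by (cases "t \<le> k") auto
    then show ?thesis using True assms by (simp add: zero_power)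
  next
    case False
    have "poly (?V k) 0 = 0" using assms(1) by (induction k) simp_all
    then have "coeff (?V k) 0 = 0" by (simp add: poly_0_coeff_0)
    have "1 \<le> degree (?V k)"
    proof (rule ccontr)
      assume "\<not> 1 \<le> degree (?V k)"
      then have "?V k = [:coeff (?V k) 0:]" by (simp add: degree_0_id)
      with \<open>coeff (?V k) 0 = 0\<close> False show False by simp
    qed
    then have "2 \<le> p * degree (?V k)" using assms(1) mult_le_mono[of 2 p 1] by simp
    also have "\<dots> = degree (?V k ^ p)" using degree_power_eq[OF False] by simp
    finally have "degree [:0, a (Suc k):] < degree (?V k ^ p)"
      using degree_pCons_le[of 0 "[:a (Suc k):]"] by simp
    then show ?thesis by auto
  qed
qed

lemma map_poly_to_ac_diff:
  "map_poly to_ac (P - Q) = map_poly to_ac P - map_poly to_ac (Q :: 'a::field poly)"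
  by (rule poly_eqI) (simp add: coeff_map_poly)

lemma map_poly_to_ac_mult:
  "map_poly to_ac (P * Q) = map_poly to_ac P * map_poly to_ac (Q :: 'a::field poly)"
  by (rule poly_eqI) (simp add: coeff_map_poly coeff_mult to_ac_sum)

lemma map_poly_to_ac_power:
  "map_poly to_ac (P ^ n) = map_poly to_ac (P :: 'a::field poly) ^ n"
  by (induction n) (simp_all add: map_poly_to_ac_mult)

text \<open>The values of \<open>s\<close> at which this polynomial vanishes are the only ones where the reduced
  degree of \<open>s f\<close> can drop below \<open>e(f)\<close>.\<close>
definition AS_obstruction :: "nat \<Rightarrow> 'a::field poly \<Rightarrow> 'a poly" where
  "AS_obstruction p f =
     (let e = AS_e p f in frob_chain p (- [:0, coeff f e:]) (\<lambda>k. [:0, coeff f (e * p ^ k):]) (degree f))"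

lemma AS_obstruction_nonzero:
  fixes f :: "'a::field poly"
  assumes "prime p" "0 < i" "coeff f i \<noteq> 0"
  shows "AS_obstruction p f \<noteq> 0"
proof -
  obtain m where m: "0 < m" "coeff f m \<noteq> 0" "prime_to_part p m = AS_e p f"
    using assms(2,3) by (rule AS_e_attained)
  define e t where "e = AS_e p f" and "t = multiplicity p m"
  have "p \<ge> 2" using assms(1) prime_ge_2_nat by blast
  have "m = e * p ^ t" using prime_to_part_mult_power[of m p] m(3) by (simp add: e_def t_def)
  have "t \<le> p ^ t" using \<open>p \<ge> 2\<close> by simp
  also have "\<dots> \<le> m" using \<open>m = e * p ^ t\<close> m(1) by simp
  also have "\<dots> \<le> degree f" using m(2) by (rule le_degree)
  finally have "t \<le> degree f" .
  then show ?thesis unfolding AS_obstruction_def Let_def e_def[symmetric]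
    using frob_chain_linear_nonzero[of p "\<lambda>k. coeff f (e * p ^ k)" t] \<open>p \<ge> 2\<close> m(2) \<open>m = e * p ^ t\<close>
    by simp
qed

lemma poly_map_poly_AS_obstruction:
  fixes f :: "'a::field poly" and s :: "'a alg_closure" and p :: nat
  defines "F \<equiv> smult s (map_poly to_ac f)" and "e \<equiv> AS_e p f"
  shows "poly (map_poly to_ac (AS_obstruction p f)) s =
           frob_chain p (- coeff F e) (\<lambda>k. coeff F (e * p ^ k)) (degree f)"
proof -
  define \<phi> where "\<phi> P = poly (map_poly to_ac P) s" for P
  have "\<phi> (P - Q) = \<phi> P - \<phi> Q" "\<phi> (P ^ n) = \<phi> P ^ n" for P Q n
    by (simp_all only: \<phi>_def map_poly_to_ac_diff map_poly_to_ac_power poly_diff poly_power)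
  note hom = frob_chain_hom[of \<phi>, OF this]
  have coeff_F: "coeff F n = s * to_ac (coeff f n)" for n by (simp add: F_def coeff_map_poly)
  have linear: "\<phi> [:0, c:] = s * to_ac c" for c by (simp add: \<phi>_def map_poly_pCons)
  have "\<phi> (- [:0, coeff f e:]) = - coeff F e"
    using linear[of "- coeff f e"] by (simp add: coeff_F)
  moreover have "\<phi> \<circ> (\<lambda>k. [:0, coeff f (e * p ^ k):]) = (\<lambda>k. coeff F (e * p ^ k))"
    by (simp add: fun_eq_iff linear coeff_F)
  ultimately have "\<phi> (AS_obstruction p f) = frob_chain p (- coeff F e) (\<lambda>k. coeff F (e * p ^ k)) (degree f)"
    unfolding AS_obstruction_def Let_def e_def[symmetric] hom by (simp only:)
  then show ?thesis by (simp add: \<phi>_def)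
qed

lemma AS_reduced_form_smult_degree:
  fixes f :: "'a::field poly" and s :: "'a alg_closure"
  assumes prime: "prime p" and p: "CHAR('a) = p" and "0 < i" "coeff f i \<noteq> 0"
    and r: "AS_reduced_form (smult s (map_poly to_ac f)) r"
    and obstruction: "poly (map_poly to_ac (AS_obstruction p f)) s \<noteq> 0"
  shows "degree r = AS_e p f"
proof -
  define F e where "F = smult s (map_poly to_ac f)" and "e = AS_e p f"
  have coeff_F: "coeff F n = s * to_ac (coeff f n)" for n by (simp add: F_def coeff_map_poly)
  obtain m where m: "0 < m" "coeff f m \<noteq> 0" "prime_to_part p m = e"
    using assms(3,4) unfolding e_def by (rule AS_e_attained)
  have "p \<ge> 2" using prime prime_ge_2_nat by blast
  have e: "0 < e" "\<not> p dvd e"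
    using prime_to_part_pos[OF m(1), of p] not_dvd_prime_to_part[OF prime m(1)] m(3) by simp_all
  show ?thesis unfolding e_def[symmetric]
  proof (rule AS_reduced_form_degree[where F = F and N = "degree f"])
    show "prime CHAR('a alg_closure)" "CHAR('a alg_closure) = p" using prime p by simp_all
    show "AS_reduced_form F r" using r by (simp add: F_def)
    show "0 < e" "\<not> p dvd e" using e by simp_all
    show "frob_chain p (- coeff F e) (\<lambda>k. coeff F (e * p ^ k)) (degree f) \<noteq> 0"
      using obstruction poly_map_poly_AS_obstruction[of p f s] by (simp add: F_def e_def)
  next
    fix j k assume "e < j" "\<not> p dvd j"
    then have "prime_to_part p (j * p ^ k) > e"
      using prime_to_part_mult_prime_power[OF prime] by simp
    moreover have "0 < j * p ^ k" using \<open>e < j\<close> \<open>p \<ge> 2\<close> by simp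
    ultimately have "coeff f (j * p ^ k) = 0"
      using prime_to_part_le_AS_e[of "j * p ^ k" f p] unfolding e_def by linarith
    then show "coeff F (j * p ^ k) = 0" by (simp add: coeff_F)
  next
    fix k assume "degree f < k"
    have "k \<le> p ^ k" using \<open>p \<ge> 2\<close> by simp
    also have "\<dots> \<le> e * p ^ k" using e by simp
    finally show "coeff F (e * p ^ k) = 0"
      using \<open>degree f < k\<close> coeff_F by (simp add: coeff_eq_0)
  qed
qed

theorem mainTheorem1:
  fixes f :: "'a::{field,finite} poly" and p :: nat
  assumes "prime p" and "CHAR('a) = p" and "cond_star p f"
  shows "\<exists>g :: 'a poly. g \<noteq> 0 \<and>
           (\<forall>s :: 'a alg_closure. s \<noteq> 0 \<and> poly (map_poly to_ac g) s \<noteq> 0 \<longrightarrow>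
              (\<exists>r. AS_reduced_form (smult s (map_poly to_ac f)) r) \<and>
              (\<forall>r. AS_reduced_form (smult s (map_poly to_ac f)) r \<longrightarrow> degree r = AS_e p f))"
proof -
  \<comment> \<open>Only a nonzero coefficient in positive degree is needed: if all such degrees are powers
     of \<open>p\<close>, then \<open>e(f) = 1\<close> and the argument still applies.\<close>
  obtain i where i: "0 < i" "coeff f i \<noteq> 0"
    using assms(3) unfolding cond_star_def by blast
  have "\<exists>c'. c' ^ p = c" for c :: "'a alg_closure"
    using nth_root_exists prime_gt_0_nat[OF assms(1)] by blast
  then have "surj (\<lambda>c::'a alg_closure. c ^ CHAR('a alg_closure))"
    unfolding surj_def using assms(2) by (metis CHAR_alg_closure)
  then have exists: "\<exists>r. AS_reduced_form G r" for G :: "'a alg_closure poly"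
    using assms(1,2) by (intro AS_reduced_form_exists) simp_all
  show ?thesis
  proof (intro exI[of _ "AS_obstruction p f"] conjI allI impI)
    show "AS_obstruction p f \<noteq> 0" using AS_obstruction_nonzero[OF assms(1) i] .
  next
    fix s :: "'a alg_closure"
    show "\<exists>r. AS_reduced_form (smult s (map_poly to_ac f)) r" by (rule exists)
  next
    fix s :: "'a alg_closure" and r
    assume "s \<noteq> 0 \<and> poly (map_poly to_ac (AS_obstruction p f)) s \<noteq> 0"
      and "AS_reduced_form (smult s (map_poly to_ac f)) r"
    then show "degree r = AS_e p f"
      using AS_reduced_form_smult_degree[OF assms(1,2) i] by blast
  qed
qed

end
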